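(* Let $L\subseteq\Sigma^*$ be a regular language with syntactic ordered monoid $(M,\le)$, let $G\subseteq M$ be a generating set and $eval:G^*\to M$ the natural evaluation morphism. If one of the following holds, then $L\notin Pol(\mathcal{C}om)(\Sigma)$: (1) there exist $u,v,w_1,w_2\in G^*$ with $u=w_1w_2$, $v$ a shuffle of $w_1$ and $w_2$, $eval(u)$ idempotent and $eval(uvu)\not\le eval(u)$; (2) $M$ is divided by a non-commutative group; (3) $M$ is a $T_q$ monoid for some $q>1$. In particular, if $M$ is a $T_q$ monoid for some $q>1$ or is divided by one of $BA_2^+$, $U^+$ or a non-commutative group, then $L\notin Pol(\mathcal{C}om)(\Sigma)$.
   Context: Syntactic ordered monoid of $L\subseteq\Sigma^*$: write $x\preceq_L y$ if for all $u,v\in\Sigma^*$, $uyv\in L\Rightarrow uxv\in L$; the syntactic monoid $\Sigma^*/\equiv_L$ (with $x\equiv_L y$ iff $x\preceq_L y$ and $y\preceq_L x$) is ordered by $[x]\le[y]$ iff $x\preceq_L y$. $\mathcal{C}om(\Sigma)$ is the set of regular languages over $\Sigma$ whose syntactic monoid is commutative; $Pol(\mathcal{C}om)(\Sigma)$ is the set of finite unions of languages $L_0a_1L_1\cdots a_kL_k$ with $k\ge0$, $a_i\in\Sigma$, $L_i\in\mathcal{C}om(\Sigma)$. $v$ is a shuffle of $w_1,w_2$ if there are $k\ge0$ and words $w_{1,1},\dots,w_{1,k},w_{2,1},\dots,w_{2,k}$ (possibly empty) with $w_1=w_{1,1}\cdots w_{1,k}$, $w_2=w_{2,1}\cdots w_{2,k}$,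 $v=w_{1,1}w_{2,1}\cdots w_{1,k}w_{2,k}$. $M$ is a $T_q$ monoid if there exist idempotents $e,f\in M$ with $(ef)^qe=e$ and $(ef)^re\ne e$ for every positive integer $r$ not divisible by $q$. An ordered monoid $N$ divides $M$ if there is a surjective order-preserving monoid morphism from a submonoid of $M$ (restricted order) onto $N$; groups carry the equality order. $BA_2^+$ is the syntactic ordered monoid of $(ab)^*\subseteq\{a,b\}^*$; $U^+$ is the syntactic ordered monoid of the complement in $\{a,b\}^*$ of $(a\cup b)^*aa(a\cup b)^*$. *)

theory Defs
  imports "HOL-Algebra.Group"
begin

definition regular :: "('a::finite) list set \<Rightarrow> bool" where
  "regular L \<longleftrightarrow> (\<exists>(Q::nat set) q0 (\<delta>::nat \<Rightarrow> 'a \<Rightarrow> nat) F.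
      finite Q \<and> q0 \<in> Q \<and> (\<forall>q\<in>Q. \<forall>a. \<delta> q a \<in> Q) \<and> F \<subseteq> Q \<and>
      L = {w. foldl \<delta> q0 w \<in> F})"

definition lang_conc :: "'a list set \<Rightarrow> 'a list set \<Rightarrow> 'a list set" where
  "lang_conc A B = {x @ y | x y. x \<in> A \<and> y \<in> B}"

definition synt_le :: "'a list set \<Rightarrow> 'a list \<Rightarrow> 'a list \<Rightarrow> bool" where
  "synt_le L x y \<longleftrightarrow> (\<forall>u v. u @ y @ v \<in> L \<longrightarrow> u @ x @ v \<in> L)"

definition synt_class :: "'a list set \<Rightarrow> 'a list \<Rightarrow> 'a list set" where
  "synt_class L x = {y. synt_le L x y \<and> synt_le L y x}"

definition synt_rep :: "'a list set \<Rightarrow> 'a list" where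
  "synt_rep X = (SOME x. x \<in> X)"

definition synt_monoid :: "'a list set \<Rightarrow> 'a list set monoid" where
  "synt_monoid L = \<lparr>carrier = range (synt_class L),
      mult = (\<lambda>X Y. synt_class L (synt_rep X @ synt_rep Y)),
      one = synt_class L []\<rparr>"

definition synt_order :: "'a list set \<Rightarrow> 'a list set \<Rightarrow> 'a list set \<Rightarrow> bool" where
  "synt_order L X Y \<longleftrightarrow> synt_le L (synt_rep X) (synt_rep Y)"

definition Com :: "('a::finite) list set set" where
  "Com = {L. regular L \<and>
     (\<forall>X\<in>carrier (synt_monoid L). \<forall>Y\<in>carrier (synt_monoid L).
        X \<otimes>\<^bsub>synt_monoid L\<^esub> Y = Y \<otimes>\<^bsub>synt_monoid L\<^esub> X)}"

text \<open>Marked product L0 a1 L1 ... ak Lk, given L0 and the list [(a1,L1),...,(ak,Lk)].\<close>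
fun mprod :: "'a list set \<Rightarrow> ('a \<times> 'a list set) list \<Rightarrow> 'a list set" where
  "mprod L0 [] = L0"
| "mprod L0 ((a, L1) # rest) = lang_conc L0 (lang_conc {[a]} (mprod L1 rest))"

definition PolCom :: "('a::finite) list set set" where
  "PolCom = {L. \<exists>F. finite F \<and>
     (\<forall>(L0, ps) \<in> F. L0 \<in> Com \<and> (\<forall>(a, Li) \<in> set ps. Li \<in> Com)) \<and>
     L = (\<Union>(L0, ps) \<in> F. mprod L0 ps)}"

definition eval :: "('m, 'b) monoid_scheme \<Rightarrow> 'm list \<Rightarrow> 'm" where
  "eval M ws = foldr (\<lambda>x y. x \<otimes>\<^bsub>M\<^esub> y) ws \<one>\<^bsub>M\<^esub>"

definition generating_set :: "('m, 'b) monoid_scheme \<Rightarrow> 'm set \<Rightarrow> bool" where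
  "generating_set M G \<longleftrightarrow> G \<subseteq> carrier M \<and> (\<forall>m\<in>carrier M. \<exists>w\<in>lists G. eval M w = m)"

definition Tq_monoid :: "('m, 'b) monoid_scheme \<Rightarrow> nat \<Rightarrow> bool" where
  "Tq_monoid M q \<longleftrightarrow> (\<exists>e\<in>carrier M. \<exists>f\<in>carrier M.
      e \<otimes>\<^bsub>M\<^esub> e = e \<and> f \<otimes>\<^bsub>M\<^esub> f = f \<and>
      (e \<otimes>\<^bsub>M\<^esub> f) [^]\<^bsub>M\<^esub> q \<otimes>\<^bsub>M\<^esub> e = e \<and>
      (\<forall>r::nat. 0 < r \<and> \<not> q dvd r \<longrightarrow> (e \<otimes>\<^bsub>M\<^esub> f) [^]\<^bsub>M\<^esub> r \<otimes>\<^bsub>M\<^esub> e \<noteq> e))"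

definition odivides :: "('n, 'c) monoid_scheme \<Rightarrow> ('n \<Rightarrow> 'n \<Rightarrow> bool) \<Rightarrow>
    ('m, 'd) monoid_scheme \<Rightarrow> ('m \<Rightarrow> 'm \<Rightarrow> bool) \<Rightarrow> bool" where
  "odivides N leN M leM \<longleftrightarrow> (\<exists>S h. S \<subseteq> carrier M \<and> \<one>\<^bsub>M\<^esub> \<in> S \<and>
      (\<forall>x\<in>S. \<forall>y\<in>S. x \<otimes>\<^bsub>M\<^esub> y \<in> S) \<and>
      h ` S = carrier N \<and>
      (\<forall>x\<in>S. \<forall>y\<in>S. h (x \<otimes>\<^bsub>M\<^esub> y) = h x \<otimes>\<^bsub>N\<^esub> h y) \<and>
      h \<one>\<^bsub>M\<^esub> = \<one>\<^bsub>N\<^esub> \<and>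
      (\<forall>x\<in>S. \<forall>y\<in>S. leM x y \<longrightarrow> leN (h x) (h y)))"

datatype ab = a | b

definition BA2_lang :: "ab list set" where
  "BA2_lang = {w. \<exists>n. w = concat (replicate n [a, b])}"

definition U_lang :: "ab list set" where
  "U_lang = {w. \<not> (\<exists>u v. w = u @ [a, a] @ v)}"

end

theory Submission
  imports Defs "HOL-Library.Multiset"
begin

(*
  A language in Pol(Com) is a finite union of marked products L0 a1 L1 ... ak Lk of
  languages with commutative syntactic monoid.  Everything rests on one inequality in
  its syntactic ordered monoid: if x is idempotent (x x ~ x) and y is a permutation of x,
  then x y x <= x.  To see it, pump x to a power x^n with n larger than the number k of
  markers; some copy of x then lies inside a single commutative factor, where it may be
  replaced by its permutation y.

  Its monoid form, the permutation
  inequality, excludes condition (1) and T_q monoids with q > 1.  In a finite monoid it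
  implies the swap inequality e yx(xy)^p e <= e for the idempotent e = (xy)^(p+1), a
  statement about elements that passes to ordered divisors and fails for non-commutative
  groups, BA2+ and U+.
*)

section \<open>Evaluation of words in a monoid\<close>

lemma eval_Nil [simp]: "eval M [] = \<one>\<^bsub>M\<^esub>"
  by (simp add: eval_def)

lemma eval_Cons [simp]: "eval M (x # ws) = x \<otimes>\<^bsub>M\<^esub> eval M ws"
  by (simp add: eval_def)

lemma concat_replicate_in_lists: "xs \<in> lists A \<Longrightarrow> concat (replicate n xs) \<in> lists A"
  by (induction n) auto

context monoid
begin

lemma eval_closed: "ws \<in> lists (carrier G) \<Longrightarrow> eval G ws \<in> carrier G"
  by (induction ws) auto

lemma eval_append:
  "ws \<in> lists (carrier G) \<Longrightarrow> vs \<in> lists (carrier G) \<Longrightarrow> eval G (ws @ vs) = eval G ws \<otimes> eval G vs"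
  by (induction ws) (auto simp: m_assoc eval_closed)

lemma eval_concat_replicate:
  assumes "ws \<in> lists (carrier G)"
  shows "eval G (concat (replicate n ws)) = eval G ws [^] n"
proof (induction n)
  case (Suc n)
  then show ?case using assms eval_closed[OF assms] concat_replicate_in_lists[OF assms]
    by (simp add: eval_append flip: nat_pow_Suc2)
qed simp

lemma eval_replicate: "x \<in> carrier G \<Longrightarrow> eval G (replicate n x) = x [^] n"
  by (induction n) (simp_all flip: nat_pow_Suc2)

lemma idempotent_pow: "x \<in> carrier G \<Longrightarrow> x \<otimes> x = x \<Longrightarrow> x [^] Suc n = x"
  by (induction n) (simp_all add: nat_pow_Suc2[of x])

text \<open>Every element of a finite monoid has an idempotent positive power: the powers of \<open>x\<close>
  are eventually periodic, and a multiple of the period beyond the preperiod is idempotent.\<close>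
lemma finite_idempotent_power:
  assumes fin: "finite (carrier G)" and x: "x \<in> carrier G"
  shows "\<exists>p. x [^] Suc p \<otimes> x [^] Suc p = x [^] Suc p"
proof -
  have "range (\<lambda>n::nat. x [^] n) \<subseteq> carrier G" using x by auto
  then have "finite (range (\<lambda>n::nat. x [^] n))" using fin by (rule finite_subset)
  then have "\<not> inj (\<lambda>n::nat. x [^] n)" using finite_imageD by fastforce
  then obtain a b :: nat where "a \<noteq> b" "x [^] a = x [^] b"
    unfolding inj_def by blast
  then obtain i j :: nat where "i < j" and eq: "x [^] i = x [^] j"
    by (metis nat_neq_iff)
  define d where "d = j - i"
  have d: "0 < d" and "j = i + d" using \<open>i < j\<close> by (simp_all add: d_def)
  have shift: "x [^] (m + d) = x [^] m" if "i \<le> m" for m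
  proof -
    have "x [^] (m + d) = x [^] (m - i) \<otimes> x [^] j"
      using that x \<open>j = i + d\<close> by (simp add: nat_pow_mult)
    also have "\<dots> = x [^] m" using that x by (simp add: nat_pow_mult flip: eq)
    finally show ?thesis .
  qed
  have period: "x [^] (m + k * d) = x [^] m" if "i \<le> m" for m k
  proof (induction k)
    case (Suc k)
    have "x [^] (m + Suc k * d) = x [^] ((m + k * d) + d)" by (simp add: algebra_simps)
    also have "\<dots> = x [^] (m + k * d)" using that by (intro shift) simp
    finally show ?case using Suc by simp
  qed simp
  define n where "n = Suc i * d"
  have "0 < n" unfolding n_def using d by simp
  then obtain p where n: "n = Suc p" using gr0_implies_Suc by blast
  have "i \<le> Suc i * 1" by simp
  also have "\<dots> \<le> Suc i * d" using d by (intro mult_le_mono2) simp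
  finally have "i \<le> n" unfolding n_def .
  then have "x [^] n \<otimes> x [^] n = x [^] n"
    using period[of n "Suc i"] x by (simp add: nat_pow_mult n_def)
  then show ?thesis unfolding n by blast
qed
end

section \<open>The syntactic ordered monoid\<close>

definition synt_equiv :: "'a list set \<Rightarrow> 'a list \<Rightarrow> 'a list \<Rightarrow> bool" where
  "synt_equiv L x y \<longleftrightarrow> synt_le L x y \<and> synt_le L y x"

lemma synt_le_refl: "synt_le L x x"
  by (simp add: synt_le_def)

lemma synt_le_trans: "synt_le L x y \<Longrightarrow> synt_le L y z \<Longrightarrow> synt_le L x z"
  by (simp add: synt_le_def)

lemma synt_le_context: "synt_le L x y \<Longrightarrow> synt_le L (p @ x @ q) (p @ y @ q)"
  unfolding synt_le_def by (metis append.assoc)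

lemma synt_le_append: "synt_le L x y \<Longrightarrow> synt_le L x' y' \<Longrightarrow> synt_le L (x @ x') (y @ y')"
  using synt_le_context[of L x y "[]" x'] synt_le_context[of L x' y' y "[]"]
  by (auto intro: synt_le_trans)

lemma synt_equiv_trans: "synt_equiv L x y \<Longrightarrow> synt_equiv L y z \<Longrightarrow> synt_equiv L x z"
  unfolding synt_equiv_def using synt_le_trans by blast

lemma synt_equiv_append:
  "synt_equiv L x y \<Longrightarrow> synt_equiv L x' y' \<Longrightarrow> synt_equiv L (x @ x') (y @ y')"
  unfolding synt_equiv_def using synt_le_append by blast

lemma synt_class_eq_iff: "synt_class L x = synt_class L y \<longleftrightarrow> synt_equiv L x y"
  unfolding synt_class_def synt_equiv_def set_eq_iff mem_Collect_eq
  by (metis synt_le_refl synt_le_trans)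

lemma synt_rep_equiv: "synt_equiv L (synt_rep (synt_class L x)) x"
proof -
  have "synt_rep (synt_class L x) \<in> synt_class L x"
    unfolding synt_rep_def by (rule someI[of _ x]) (simp add: synt_class_def synt_le_refl)
  then show ?thesis by (simp add: synt_class_def synt_equiv_def)
qed

lemma synt_class_rep: "X \<in> carrier (synt_monoid L) \<Longrightarrow> synt_class L (synt_rep X) = X"
  using synt_rep_equiv synt_class_eq_iff by (fastforce simp: synt_monoid_def)

lemma synt_one: "\<one>\<^bsub>synt_monoid L\<^esub> = synt_class L []"
  by (simp add: synt_monoid_def)

lemma synt_mult: "synt_class L x \<otimes>\<^bsub>synt_monoid L\<^esub> synt_class L y = synt_class L (x @ y)"
  unfolding synt_monoid_def using synt_rep_equiv synt_equiv_append synt_class_eq_iff by simp blast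

lemma synt_order: "synt_order L (synt_class L x) (synt_class L y) \<longleftrightarrow> synt_le L x y"
  unfolding synt_order_def using synt_rep_equiv[of L x] synt_rep_equiv[of L y]
  unfolding synt_equiv_def using synt_le_trans by blast

lemma synt_carrierE:
  assumes "X \<in> carrier (synt_monoid L)" obtains x where "X = synt_class L x"
  using assms by (auto simp: synt_monoid_def)

lemma synt_class_in_carrier: "synt_class L x \<in> carrier (synt_monoid L)"
  by (simp add: synt_monoid_def)

lemma monoid_synt_monoid: "monoid (synt_monoid L)"
  by (rule monoidI) (auto elim!: synt_carrierE simp: synt_one synt_mult synt_class_in_carrier)

lemma synt_pow: "synt_class L x [^]\<^bsub>synt_monoid L\<^esub> n = synt_class L (concat (replicate n x))"
  by (induction n) (simp_all add: synt_one synt_mult flip: replicate_append_same)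

lemma synt_eval_classes: "eval (synt_monoid L) (map (synt_class L) zs) = synt_class L (concat zs)"
  by (induction zs) (simp_all add: synt_one synt_mult)

lemma synt_eval:
  assumes "ws \<in> lists (carrier (synt_monoid L))"
  shows "eval (synt_monoid L) ws = synt_class L (concat (map synt_rep ws))"
proof -
  have "ws = map (synt_class L) (map synt_rep ws)"
    using assms by (induction ws) (simp_all add: synt_class_rep)
  then show ?thesis by (metis synt_eval_classes)
qed

lemma synt_order_trans:
  "X \<in> carrier (synt_monoid L) \<Longrightarrow> Y \<in> carrier (synt_monoid L) \<Longrightarrow> Z \<in> carrier (synt_monoid L) \<Longrightarrow>
   synt_order L X Y \<Longrightarrow> synt_order L Y Z \<Longrightarrow> synt_order L X Z"
  by (elim synt_carrierE) (auto simp: synt_order intro: synt_le_trans)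

lemma synt_order_antisym:
  "X \<in> carrier (synt_monoid L) \<Longrightarrow> Y \<in> carrier (synt_monoid L) \<Longrightarrow>
   synt_order L X Y \<Longrightarrow> synt_order L Y X \<Longrightarrow> X = Y"
  by (elim synt_carrierE) (auto simp: synt_order synt_class_eq_iff synt_equiv_def)

lemma synt_order_mult_left:
  "X \<in> carrier (synt_monoid L) \<Longrightarrow> Y \<in> carrier (synt_monoid L) \<Longrightarrow> Z \<in> carrier (synt_monoid L) \<Longrightarrow>
   synt_order L X Y \<Longrightarrow> synt_order L (Z \<otimes>\<^bsub>synt_monoid L\<^esub> X) (Z \<otimes>\<^bsub>synt_monoid L\<^esub> Y)"
  by (elim synt_carrierE) (simp add: synt_order synt_mult synt_le_append synt_le_refl)

lemma synt_le_memD: "synt_le L x y \<Longrightarrow> u @ y @ v \<in> L \<Longrightarrow> u @ x @ v \<in> L"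
  by (simp add: synt_le_def)

text \<open>The syntactic monoid of a regular language is finite: the class of a word is
  determined by the transformation it induces on the states of an automaton.\<close>
lemma finite_synt_monoid:
  assumes "regular L" shows "finite (carrier (synt_monoid L))"
proof -
  obtain Q q0 \<delta> F where Q: "finite (Q::nat set)" "q0 \<in> Q" "\<forall>q\<in>Q. \<forall>c. \<delta> q c \<in> Q"
      and L: "L = {w. foldl \<delta> q0 w \<in> F}"
    using assms unfolding regular_def by blast
  have closed: "q \<in> Q \<Longrightarrow> foldl \<delta> q w \<in> Q" for q w
    by (induction w arbitrary: q) (use Q(3) in auto)
  define T where "T w = restrict (\<lambda>q. foldl \<delta> q w) Q" for w
  have class_eq: "synt_class L w = synt_class L w'" if "T w = T w'" for w w'
  proof -
    have "foldl \<delta> q w = foldl \<delta> q w'" if "q \<in> Q" for q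
      using \<open>T w = T w'\<close> that unfolding T_def by (metis restrict_apply')
    then have "u @ w @ v \<in> L \<longleftrightarrow> u @ w' @ v \<in> L" for u v
      using closed[OF Q(2), of u] by (simp add: L)
    then show ?thesis by (simp add: synt_class_eq_iff synt_equiv_def synt_le_def)
  qed
  have "T w \<in> Q \<rightarrow>\<^sub>E Q" for w
    unfolding T_def using closed by auto
  then have "range T \<subseteq> Q \<rightarrow>\<^sub>E Q" by blast
  moreover have "finite (Q \<rightarrow>\<^sub>E Q)"
    using Q(1) by (simp add: finite_PiE)
  ultimately have "finite (range T)"
    by (rule finite_subset)
  moreover have "carrier (synt_monoid L) \<subseteq> (\<lambda>g. synt_class L (SOME w. T w = g)) ` range T"
  proof
    fix X assume "X \<in> carrier (synt_monoid L)"
    then obtain w where X: "X = synt_class L w" by (rule synt_carrierE)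
    have "T (SOME w'. T w' = T w) = T w" by (rule someI) (rule refl)
    then have "X = synt_class L (SOME w'. T w' = T w)" using X class_eq by metis
    then show "X \<in> (\<lambda>g. synt_class L (SOME w. T w = g)) ` range T" by blast
  qed
  ultimately show ?thesis by (meson finite_imageI finite_subset)
qed

section \<open>Polynomials of commutative languages\<close>

lemma Com_permutation_le:
  assumes "K \<in> Com" and "mset y = mset x"
  shows "synt_le K y x"
  using assms(2)
proof (induction x arbitrary: y)
  case Nil then show ?case by (simp add: synt_le_refl)
next
  case (Cons c x)
  then obtain y1 y2 where y: "y = y1 @ c # y2"
    by (metis list.set_intros(1) set_mset_mset split_list)
  with Cons.prems have "mset (y1 @ y2) = mset x" by simp
  then have "synt_le K (c # y1 @ y2) (c # x)"
    using Cons.IH synt_le_append[OF synt_le_refl[of K "[c]"]] by fastforce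
  moreover have "synt_class K y1 \<otimes>\<^bsub>synt_monoid K\<^esub> synt_class K [c]
      = synt_class K [c] \<otimes>\<^bsub>synt_monoid K\<^esub> synt_class K y1"
    using assms(1) unfolding Com_def by (simp add: synt_class_in_carrier)
  then have "synt_le K (y1 @ [c]) ([c] @ y1)"
    by (simp add: synt_mult synt_class_eq_iff synt_equiv_def)
  then have "synt_le K y (c # y1 @ y2)"
    using synt_le_append[OF _ synt_le_refl[of K y2]] y by fastforce
  ultimately show ?case by (rule synt_le_trans[rotated])
qed

lemma append_eq_marker_cases:
  assumes "p @ q = z @ c # w"
  obtains r where "z = p @ r" and "q = r @ c # w"
    | r where "p = z @ c # r" and "w = r @ q"
  using assms by (auto simp: append_eq_append_conv2 append_eq_Cons_conv)

lemma mprod_ConsI: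
  "z \<in> L0 \<Longrightarrow> w \<in> mprod L1 ps \<Longrightarrow> z @ c # w \<in> mprod L0 ((c, L1) # ps)"
  unfolding mprod.simps lang_conc_def by fastforce

text \<open>Pumping lemma for marked products: if a power \<open>x\<^sup>n\<close> sits inside a word of
  \<open>L\<^sub>0 a\<^sub>1 L\<^sub>1 \<dots> a\<^sub>k L\<^sub>k\<close> with \<open>k < n\<close>, some copy of \<open>x\<close> contains no marker
  and lies inside one factor \<open>L\<^sub>i\<close>; if \<open>y \<preceq> x\<close> in every factor, that copy can be
  replaced by \<open>y\<close>.\<close>
lemma mprod_replace_factor:
  assumes le: "\<And>K. K \<in> insert L0 (snd ` set ps) \<Longrightarrow> synt_le K y x"
    and "length ps < n" and "s @ concat (replicate n x) @ t \<in> mprod L0 ps"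
  shows "\<exists>i j. i + 1 + j = n \<and>
           s @ concat (replicate i x) @ y @ concat (replicate j x) @ t \<in> mprod L0 ps"
  using assms
proof (induction ps arbitrary: L0 s n)
  case Nil
  then obtain m where n: "n = Suc m" by (cases n) auto
  have "s @ x @ (concat (replicate m x) @ t) \<in> L0" using Nil n by simp
  then have "s @ y @ (concat (replicate m x) @ t) \<in> L0"
    using Nil.prems(1) synt_le_memD by simp
  then show ?case using n by (intro exI[of _ 0] exI[of _ m]) simp
next
  case (Cons pr ps)
  obtain c L1 where pr: "pr = (c, L1)" by fastforce
  obtain m where n: "n = Suc m" using Cons.prems(2) by (cases n) auto
  from Cons.prems(3) obtain z w where z: "z \<in> L0" and w: "w \<in> mprod L1 ps"
    and eq: "(s @ x) @ (concat (replicate m x) @ t) = z @ c # w"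
    by (auto simp: pr n lang_conc_def)
  from eq show ?case
  proof (cases rule: append_eq_marker_cases)
    case (1 r)
    text \<open>The first copy of \<open>x\<close> lies in the factor \<open>L\<^sub>0\<close>.\<close>
    have "synt_le L0 y x" using Cons.prems(1) by simp
    then have "s @ y @ r \<in> L0"
      using z 1(1) unfolding synt_le_def by (metis append.assoc)
    then have "(s @ y @ r) @ c # w \<in> mprod L0 (pr # ps)"
      unfolding pr using w by (rule mprod_ConsI)
    then show ?thesis using 1 n by (intro exI[of _ 0] exI[of _ m]) simp
  next
    case (2 r)
    text \<open>The first marker lies within \<open>s x\<close>; continue in the rest of the product.\<close>
    have le1: "synt_le K y x" if "K \<in> insert L1 (snd ` set ps)" for K
      using Cons.prems(1) that pr by auto
    have "length ps < m" using Cons.prems(2) n by simp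
    moreover have "r @ concat (replicate m x) @ t \<in> mprod L1 ps" using w 2(2) by simp
    ultimately obtain i j where ij: "i + 1 + j = m"
      and rest: "r @ concat (replicate i x) @ y @ concat (replicate j x) @ t \<in> mprod L1 ps"
      using Cons.IH[OF le1] by blast
    have "z @ c # (r @ concat (replicate i x) @ y @ concat (replicate j x) @ t) \<in> mprod L0 (pr # ps)"
      unfolding pr using z rest by (rule mprod_ConsI)
    then have "s @ concat (replicate (Suc i) x) @ y @ concat (replicate j x) @ t \<in> mprod L0 (pr # ps)"
      using 2(1) by (metis append.assoc append_Cons concat.simps(2) replicate_Suc)
    moreover have "Suc i + 1 + j = n" using ij n by simp
    ultimately show ?thesis by blast
  qed
qed

lemma synt_equiv_idempotent_power:
  assumes "synt_equiv L (x @ x) x"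
  shows "synt_equiv L (concat (replicate (Suc m) x)) x"
proof (induction m)
  case 0 then show ?case by (simp add: synt_equiv_def synt_le_refl)
next
  case (Suc m)
  then have "synt_equiv L (x @ concat (replicate (Suc m) x)) (x @ x)"
    using synt_equiv_append synt_equiv_def synt_le_refl by blast
  then show ?case using assms synt_equiv_trans by simp
qed

text \<open>Replace \<open>x\<close> by a
  power longer than the number of markers and replace one copy inside a factor.\<close>
lemma PolCom_permutation_le:
  assumes L: "L \<in> PolCom" and idem: "synt_equiv L (x @ x) x" and perm: "mset y = mset x"
  shows "synt_le L (x @ y @ x) x"
  unfolding synt_le_def
proof (intro allI impI)
  fix u v assume "u @ x @ v \<in> L"
  obtain F where F: "finite F" "\<forall>(L0, ps) \<in> F. L0 \<in> Com \<and> (\<forall>(c, Li) \<in> set ps. Li \<in> Com)"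
    "L = (\<Union>(L0, ps) \<in> F. mprod L0 ps)"
    using L unfolding PolCom_def by blast
  define k where "k = Suc (\<Sum>(L0, ps)\<in>F. length ps)"
  have pow: "synt_le L (concat (replicate (Suc m) x)) x" "synt_le L x (concat (replicate (Suc m) x))"
    for m using synt_equiv_idempotent_power[OF idem] by (simp_all add: synt_equiv_def)
  have "u @ concat (replicate (Suc (Suc k)) x) @ v \<in> L"
    using pow(1) \<open>u @ x @ v \<in> L\<close> by (rule synt_le_memD)
  then obtain L0 ps where mem: "(L0, ps) \<in> F"
    and "(u @ x) @ concat (replicate k x) @ (x @ v) \<in> mprod L0 ps"
    using F(3) by (auto simp flip: replicate_append_same)
  moreover have "synt_le K y x" if "K \<in> insert L0 (snd ` set ps)" for K
    using F(2) mem that Com_permutation_le perm by fastforce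
  moreover have "length ps < k"
    using member_le_sum[OF mem, of "\<lambda>(L0, ps). length ps"] F(1) by (simp add: k_def)
  ultimately obtain i j where
    "(u @ x) @ concat (replicate i x) @ y @ concat (replicate j x) @ (x @ v) \<in> mprod L0 ps"
    using mprod_replace_factor by metis
  then have "u @ concat (replicate (Suc i) x) @ (y @ concat (replicate j x) @ x @ v) \<in> L"
    using F(3) mem by auto
  then have "(u @ x @ y) @ concat (replicate j x @ [x]) @ v \<in> L"
    using synt_le_memD[OF pow(2)] by simp
  then have "(u @ x @ y) @ concat (replicate (Suc j) x) @ v \<in> L"
    by (simp only: replicate_append_same replicate_Suc)
  then have "(u @ x @ y) @ x @ v \<in> L"
    by (rule synt_le_memD[OF pow(2)])
  then show "u @ (x @ y @ x) @ v \<in> L" by simp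
qed

section \<open>The permutation inequality\<close>

text \<open>It is the monoid form of the key inequality for Pol(Com).\<close>
definition permutation_inequality :: "('m, 'b) monoid_scheme \<Rightarrow> ('m \<Rightarrow> 'm \<Rightarrow> bool) \<Rightarrow> bool" where
  "permutation_inequality M leq \<longleftrightarrow>
     (\<forall>ws\<in>lists (carrier M). \<forall>vs\<in>lists (carrier M). mset vs = mset ws \<longrightarrow>
        eval M ws \<otimes>\<^bsub>M\<^esub> eval M ws = eval M ws \<longrightarrow> leq (eval M (ws @ vs @ ws)) (eval M ws))"

lemma mset_concat_map_perm:
  "mset vs = mset ws \<Longrightarrow> mset (concat (map f vs)) = mset (concat (map f ws))"
  by (simp add: mset_concat mset_map flip: sum_mset_sum_list)

lemma PolCom_permutation_inequality:
  assumes "L \<in> PolCom"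
  shows "permutation_inequality (synt_monoid L) (synt_order L)"
  unfolding permutation_inequality_def
proof (intro ballI impI)
  let ?M = "synt_monoid L"
  fix ws vs assume ws: "ws \<in> lists (carrier ?M)" and vs: "vs \<in> lists (carrier ?M)"
    and perm: "mset vs = mset ws" and idem: "eval ?M ws \<otimes>\<^bsub>?M\<^esub> eval ?M ws = eval ?M ws"
  define x where "x = concat (map synt_rep ws)"
  define y where "y = concat (map synt_rep vs)"
  have eval_ws: "eval ?M ws = synt_class L x"
    using synt_eval[OF ws] by (simp add: x_def)
  have "eval ?M (ws @ vs @ ws) = synt_class L (x @ y @ x)"
    using synt_eval[of "ws @ vs @ ws" L] ws vs by (simp add: x_def y_def)
  moreover have "synt_equiv L (x @ x) x"
    using idem by (simp add: eval_ws synt_mult synt_class_eq_iff)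
  moreover have "mset y = mset x"
    using mset_concat_map_perm[OF perm] by (simp add: x_def y_def)
  ultimately show "synt_order L (eval ?M (ws @ vs @ ws)) (eval ?M ws)"
    using PolCom_permutation_le[OF assms] by (simp add: eval_ws synt_order)
qed

text \<open>Shuffles are permutations, so the permutation inequality excludes condition (1).\<close>
lemma permutation_inequality_shuffle:
  assumes "permutation_inequality M leq" and "G \<subseteq> carrier M"
    and "u \<in> lists G" "v \<in> lists G" "u = w1 @ w2" "v \<in> shuffles w1 w2"
    and "eval M u \<otimes>\<^bsub>M\<^esub> eval M u = eval M u"
  shows "leq (eval M (u @ v @ u)) (eval M u)"
proof -
  have "mset v = mset u" using mset_shuffles[OF assms(6)] assms(5) by simp
  moreover have "u \<in> lists (carrier M)" "v \<in> lists (carrier M)" using assms(2-4) by auto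
  ultimately show ?thesis using assms(1,7) unfolding permutation_inequality_def by blast
qed

context monoid
begin

text \<open>A \<open>T\<^sub>q\<close> monoid (\<open>q > 1\<close>) violates the permutation inequality for any compatible
  partial order: from \<open>efe \<le> e\<close> one gets \<open>e = (ef)\<^sup>q\<^sup>-\<^sup>1 efe \<le> (ef)\<^sup>q\<^sup>-\<^sup>1 e \<le> e\<close>.\<close>
lemma Tq_violates_permutation_inequality:
  assumes trans: "\<And>x y z. x \<in> carrier G \<Longrightarrow> y \<in> carrier G \<Longrightarrow> z \<in> carrier G \<Longrightarrow>
      leq x y \<Longrightarrow> leq y z \<Longrightarrow> leq x z"
    and antisym: "\<And>x y. x \<in> carrier G \<Longrightarrow> y \<in> carrier G \<Longrightarrow> leq x y \<Longrightarrow> leq y x \<Longrightarrow> x = y"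
    and mult_left: "\<And>x y z. x \<in> carrier G \<Longrightarrow> y \<in> carrier G \<Longrightarrow> z \<in> carrier G \<Longrightarrow>
      leq x y \<Longrightarrow> leq (z \<otimes> x) (z \<otimes> y)"
    and perm_ineq: "permutation_inequality G leq" and q: "1 < q"
  shows "\<not> Tq_monoid G q"
proof
  assume "Tq_monoid G q"
  then obtain e f where e: "e \<in> carrier G" "e \<otimes> e = e" and f: "f \<in> carrier G" "f \<otimes> f = f"
    and cycle: "(e \<otimes> f) [^] q \<otimes> e = e"
    and aperiodic: "\<And>r::nat. 0 < r \<Longrightarrow> \<not> q dvd r \<Longrightarrow> (e \<otimes> f) [^] r \<otimes> e \<noteq> e"
    unfolding Tq_monoid_def by blast
  obtain r where q_eq: "q = Suc r" and "0 < r" using q by (cases q) auto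
  text \<open>The word \<open>(ef)\<^sup>q e\<close> evaluates to \<open>e\<close>, its permutation \<open>e\<^sup>q\<^sup>+\<^sup>1 f\<^sup>q\<close> to \<open>ef\<close>.\<close>
  define ws where "ws = concat (replicate q [e, f]) @ [e]"
  define vs where "vs = replicate (Suc q) e @ replicate q f"
  have lists: "ws \<in> lists (carrier G)" "vs \<in> lists (carrier G)"
    using e f concat_replicate_in_lists[of "[e, f]" "carrier G"] by (auto simp: ws_def vs_def)
  have "mset (concat (replicate n [e, f])) = replicate_mset n e + replicate_mset n f" for n
    by (induction n) auto
  then have perm: "mset vs = mset ws" by (simp add: ws_def vs_def)
  have eval_ws: "eval G ws = e"
    using e f lists cycle concat_replicate_in_lists[of "[e, f]" "carrier G"]
    by (simp add: ws_def eval_append eval_concat_replicate)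
  have "eval G vs = eval G (replicate (Suc q) e) \<otimes> eval G (replicate q f)"
    unfolding vs_def using e f by (intro eval_append) auto
  also have "\<dots> = e \<otimes> f"
    using e f by (simp only: eval_replicate q_eq idempotent_pow)
  finally have eval_vs: "eval G vs = e \<otimes> f" .
  have "leq (eval G (ws @ vs @ ws)) (eval G ws)"
    using perm_ineq lists perm e(2)[folded eval_ws] unfolding permutation_inequality_def by blast
  then have "leq (e \<otimes> (e \<otimes> f \<otimes> e)) e"
    using lists e f by (simp add: eval_append eval_ws eval_vs m_assoc)
  then have efe: "leq (e \<otimes> f \<otimes> e) e"
    using e f by (simp flip: m_assoc)
  have powers: "leq ((e \<otimes> f) [^] Suc n \<otimes> e) e" for n
  proof (induction n)
    case 0 show ?case using e f efe by simp
  next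
    case (Suc n)
    let ?a = "(e \<otimes> f) [^] Suc n"
    have a: "?a \<in> carrier G" using e f by simp
    have le: "leq (?a \<otimes> (e \<otimes> f \<otimes> e)) (?a \<otimes> e)"
      using e f a by (intro mult_left efe) simp_all
    have "leq (?a \<otimes> (e \<otimes> f \<otimes> e)) e"
      using trans[OF _ _ e(1) le Suc] e f a by simp
    moreover have "(e \<otimes> f) [^] Suc (Suc n) \<otimes> e = ?a \<otimes> (e \<otimes> f \<otimes> e)"
      using e f by (simp add: m_assoc)
    ultimately show ?case by simp
  qed
  obtain r' where r': "r = Suc r'" using \<open>0 < r\<close> gr0_implies_Suc by blast
  have "e = (e \<otimes> f) [^] r \<otimes> (e \<otimes> f \<otimes> e)"
    using cycle e f by (simp add: q_eq m_assoc)
  also have "leq \<dots> ((e \<otimes> f) [^] r \<otimes> e)"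
    using e f by (intro mult_left efe) simp_all
  finally have le: "leq e ((e \<otimes> f) [^] r \<otimes> e)" .
  have "(e \<otimes> f) [^] r \<otimes> e = e"
    using antisym[OF _ e(1) powers[of r', folded r'] le] e f by simp
  moreover have "\<not> q dvd r" using \<open>0 < r\<close> q_eq by (auto dest: dvd_imp_le)
  ultimately show False using aperiodic \<open>0 < r\<close> by blast
qed

end

section \<open>The swap inequality and ordered divisors\<close>

text \<open>Unlike the permutation inequality it only refers to
  elements, hence is inherited by divisors.\<close>
definition swap_witness :: "('m, 'b) monoid_scheme \<Rightarrow> ('m \<Rightarrow> 'm \<Rightarrow> bool) \<Rightarrow> 'm \<Rightarrow> 'm \<Rightarrow> nat \<Rightarrow> bool" where
  "swap_witness M leq x y p \<longleftrightarrow>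
     (let e = (x \<otimes>\<^bsub>M\<^esub> y) [^]\<^bsub>M\<^esub> Suc p in
      e \<otimes>\<^bsub>M\<^esub> e = e \<and> leq (e \<otimes>\<^bsub>M\<^esub> (y \<otimes>\<^bsub>M\<^esub> x \<otimes>\<^bsub>M\<^esub> (x \<otimes>\<^bsub>M\<^esub> y) [^]\<^bsub>M\<^esub> p) \<otimes>\<^bsub>M\<^esub> e) e)"

definition swap_inequality :: "('m, 'b) monoid_scheme \<Rightarrow> ('m \<Rightarrow> 'm \<Rightarrow> bool) \<Rightarrow> bool" where
  "swap_inequality M leq \<longleftrightarrow> (\<forall>x\<in>carrier M. \<forall>y\<in>carrier M. \<exists>p. swap_witness M leq x y p)"

text \<open>In a finite monoid the permutation inequality implies the swap inequality: apply it
  to the word \<open>(xy)\<^sup>p\<^sup>+\<^sup>1\<close>, with idempotent value, and its permutation \<open>yx(xy)\<^sup>p\<close>.\<close>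
lemma (in monoid) swap_inequality_if_permutation_inequality:
  assumes fin: "finite (carrier G)" and perm_ineq: "permutation_inequality G leq"
  shows "swap_inequality G leq"
  unfolding swap_inequality_def
proof (intro ballI)
  fix x y assume x: "x \<in> carrier G" and y: "y \<in> carrier G"
  obtain p where idem: "(x \<otimes> y) [^] Suc p \<otimes> (x \<otimes> y) [^] Suc p = (x \<otimes> y) [^] Suc p"
    using finite_idempotent_power[OF fin] x y by blast
  define e where "e = (x \<otimes> y) [^] Suc p"
  define ws where "ws = concat (replicate (Suc p) [x, y])"
  define vs where "vs = [y, x] @ concat (replicate p [x, y])"
  have lists: "ws \<in> lists (carrier G)" "vs \<in> lists (carrier G)"
    using x y concat_replicate_in_lists[of "[x, y]" "carrier G"] by (simp_all add: ws_def vs_def)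
  have eval_xy: "eval G (concat (replicate n [x, y])) = (x \<otimes> y) [^] n" for n
    using x y eval_concat_replicate[of "[x, y]" n] by simp
  have eval_ws: "eval G ws = e"
    by (simp only: ws_def e_def eval_xy)
  have eval_vs: "eval G vs = y \<otimes> x \<otimes> (x \<otimes> y) [^] p"
    using x y by (simp add: vs_def eval_xy m_assoc)
  have "mset vs = mset ws" by (simp add: vs_def ws_def)
  moreover have "eval G ws \<otimes> eval G ws = eval G ws"
    using idem by (simp only: eval_ws e_def)
  ultimately have "leq (eval G (ws @ vs @ ws)) (eval G ws)"
    using perm_ineq lists unfolding permutation_inequality_def by blast
  moreover have "eval G (ws @ vs @ ws) = e \<otimes> (y \<otimes> x \<otimes> (x \<otimes> y) [^] p) \<otimes> e"
    using lists x y by (simp add: eval_append eval_ws eval_vs e_def m_assoc)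
  ultimately have "swap_witness G leq x y p"
    using idem eval_ws unfolding swap_witness_def Let_def e_def by simp
  then show "\<exists>p. swap_witness G leq x y p" ..
qed

lemma submonoid_hom_pow:
  assumes one: "\<one>\<^bsub>M\<^esub> \<in> S" and mult: "\<forall>x\<in>S. \<forall>y\<in>S. x \<otimes>\<^bsub>M\<^esub> y \<in> S"
    and hom: "\<forall>x\<in>S. \<forall>y\<in>S. h (x \<otimes>\<^bsub>M\<^esub> y) = h x \<otimes>\<^bsub>N\<^esub> h y" "h \<one>\<^bsub>M\<^esub> = \<one>\<^bsub>N\<^esub>"
    and x: "x \<in> S"
  shows "x [^]\<^bsub>M\<^esub> (n::nat) \<in> S \<and> h (x [^]\<^bsub>M\<^esub> n) = h x [^]\<^bsub>N\<^esub> n"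
  by (induction n) (simp_all add: one mult hom x)

lemma swap_inequality_divisor:
  assumes swap: "swap_inequality M leM" and div: "odivides N leN M leM"
  shows "swap_inequality N leN"
  unfolding swap_inequality_def
proof (intro ballI)
  obtain S h where S: "S \<subseteq> carrier M" "\<one>\<^bsub>M\<^esub> \<in> S" "\<forall>x\<in>S. \<forall>y\<in>S. x \<otimes>\<^bsub>M\<^esub> y \<in> S"
    and onto: "h ` S = carrier N"
    and hom: "\<forall>x\<in>S. \<forall>y\<in>S. h (x \<otimes>\<^bsub>M\<^esub> y) = h x \<otimes>\<^bsub>N\<^esub> h y" "h \<one>\<^bsub>M\<^esub> = \<one>\<^bsub>N\<^esub>"
    and mono: "\<forall>x\<in>S. \<forall>y\<in>S. leM x y \<longrightarrow> leN (h x) (h y)"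
    using div unfolding odivides_def by blast
  fix x y assume "x \<in> carrier N" "y \<in> carrier N"
  then obtain s t where st: "s \<in> S" "t \<in> S" and x: "x = h s" and y: "y = h t"
    using onto by blast
  define a where "a = s \<otimes>\<^bsub>M\<^esub> t"
  obtain p where
    idem: "a [^]\<^bsub>M\<^esub> Suc p \<otimes>\<^bsub>M\<^esub> a [^]\<^bsub>M\<^esub> Suc p = a [^]\<^bsub>M\<^esub> Suc p" and
    ineq: "leM (a [^]\<^bsub>M\<^esub> Suc p \<otimes>\<^bsub>M\<^esub> (t \<otimes>\<^bsub>M\<^esub> s \<otimes>\<^bsub>M\<^esub> a [^]\<^bsub>M\<^esub> p) \<otimes>\<^bsub>M\<^esub> a [^]\<^bsub>M\<^esub> Suc p)
             (a [^]\<^bsub>M\<^esub> Suc p)"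
    using swap st S(1) unfolding swap_inequality_def swap_witness_def Let_def a_def by blast
  have a: "a \<in> S" "h a = x \<otimes>\<^bsub>N\<^esub> y" using st S(3) hom(1) by (auto simp: a_def x y)
  have ts: "t \<otimes>\<^bsub>M\<^esub> s \<in> S" "h (t \<otimes>\<^bsub>M\<^esub> s) = y \<otimes>\<^bsub>N\<^esub> x"
    using st S(3) hom(1) by (auto simp: x y)
  note pow = submonoid_hom_pow[OF S(2,3) hom a(1)]
  define e where "e = a [^]\<^bsub>M\<^esub> Suc p"
  define B where "B = t \<otimes>\<^bsub>M\<^esub> s \<otimes>\<^bsub>M\<^esub> a [^]\<^bsub>M\<^esub> p"
  have e: "e \<in> S" "h e = (x \<otimes>\<^bsub>N\<^esub> y) [^]\<^bsub>N\<^esub> Suc p"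
    using pow[of "Suc p"] a(2) unfolding e_def by simp_all
  have B: "B \<in> S" "h B = y \<otimes>\<^bsub>N\<^esub> x \<otimes>\<^bsub>N\<^esub> (x \<otimes>\<^bsub>N\<^esub> y) [^]\<^bsub>N\<^esub> p"
    using pow[of p] a(2) ts S(3) hom(1) by (simp_all add: B_def)
  have "leN (h (e \<otimes>\<^bsub>M\<^esub> B \<otimes>\<^bsub>M\<^esub> e)) (h e)"
    using mono ineq[folded e_def B_def] e(1) B(1) S(3) by blast
  then have ineq_N: "leN (h e \<otimes>\<^bsub>N\<^esub> h B \<otimes>\<^bsub>N\<^esub> h e) (h e)"
    using e(1) B(1) S(3) hom(1) by simp
  have idem_N: "h e \<otimes>\<^bsub>N\<^esub> h e = h e"
    using arg_cong[OF idem[folded e_def], of h] e(1) hom(1) by simp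
  have "swap_witness N leN x y p"
    using idem_N ineq_N unfolding swap_witness_def Let_def B(2)[symmetric] e(2)[symmetric] by simp
  then show "\<exists>p. swap_witness N leN x y p" ..
qed

text \<open>With equality as order, the swap inequality forces a group to be commutative:
  the idempotent \<open>e\<close> is \<open>1\<close>, hence \<open>yx(xy)\<^sup>p = 1 = (xy)\<^sup>p xy\<close>, and \<open>yx = xy\<close>.\<close>
lemma (in group) comm_group_if_swap_equality:
  assumes "swap_inequality G (=)"
  shows "comm_group G"
proof (rule group_comm_groupI)
  fix x y assume x: "x \<in> carrier G" and y: "y \<in> carrier G"
  then obtain p where idem: "(x \<otimes> y) [^] Suc p \<otimes> (x \<otimes> y) [^] Suc p = (x \<otimes> y) [^] Suc p"
    and eq: "(x \<otimes> y) [^] Suc p \<otimes> (y \<otimes> x \<otimes> (x \<otimes> y) [^] p) \<otimes> (x \<otimes> y) [^] Suc p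
             = (x \<otimes> y) [^] Suc p"
    using assms unfolding swap_inequality_def swap_witness_def Let_def by blast
  define c where "c = (x \<otimes> y) [^] p"
  have c: "c \<in> carrier G" using x y by (simp add: c_def)
  have "(x \<otimes> y) [^] Suc p = \<one>" using idem x y by simp
  then have right: "c \<otimes> (x \<otimes> y) = \<one>" and "y \<otimes> x \<otimes> c = \<one>"
    using eq x y by (simp_all add: c_def)
  then show "x \<otimes> y = y \<otimes> x"
    using inv_unique[OF _ right] x y c by simp
qed

lemma synt_swap_inequality_letters:
  assumes "swap_inequality (synt_monoid K) (synt_order K)"
  obtains p where "synt_le K
     (concat (replicate (Suc p) [c, d]) @ d # c # concat (replicate p [c, d]) @ concat (replicate (Suc p) [c, d]))
     (concat (replicate (Suc p) [c, d]))"
proof -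
  have "synt_class K [c] \<in> carrier (synt_monoid K)" "synt_class K [d] \<in> carrier (synt_monoid K)"
    by (simp_all add: synt_class_in_carrier)
  then obtain p where "synt_order K
      ((synt_class K [c, d]) [^]\<^bsub>synt_monoid K\<^esub> Suc p \<otimes>\<^bsub>synt_monoid K\<^esub>
       (synt_class K [d, c] \<otimes>\<^bsub>synt_monoid K\<^esub> (synt_class K [c, d]) [^]\<^bsub>synt_monoid K\<^esub> p)
       \<otimes>\<^bsub>synt_monoid K\<^esub> (synt_class K [c, d]) [^]\<^bsub>synt_monoid K\<^esub> Suc p)
      ((synt_class K [c, d]) [^]\<^bsub>synt_monoid K\<^esub> Suc p)"
    using assms unfolding swap_inequality_def swap_witness_def Let_def by (fastforce simp: synt_mult)
  then show ?thesis
    by (intro that[of p]) (simp only: synt_pow synt_mult synt_order append.assoc append_Cons append_Nil)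
qed

lemma BA2_not_prefix: "concat (replicate n [a, b]) \<noteq> concat (replicate m [a, b]) @ b # w"
proof (induction m arbitrary: n)
  case 0 then show ?case by (cases n) auto
next
  case (Suc m) then show ?case by (cases n) auto
qed

text \<open>\<open>BA\<^sub>2\<^sup>+\<close> violates the swap inequality: \<open>(ab)\<^sup>p\<^sup>+\<^sup>1 \<in> (ab)\<^sup>*\<close> but inserting \<open>ba\<close> creates \<open>bb\<close>.\<close>
lemma BA2_violates_swap_inequality: "\<not> swap_inequality (synt_monoid BA2_lang) (synt_order BA2_lang)"
proof
  assume "swap_inequality (synt_monoid BA2_lang) (synt_order BA2_lang)"
  then obtain p where le: "synt_le BA2_lang
     (concat (replicate (Suc p) [a, b]) @ b # a # concat (replicate p [a, b]) @ concat (replicate (Suc p) [a, b]))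
     (concat (replicate (Suc p) [a, b]))"
    by (rule synt_swap_inequality_letters)
  have "concat (replicate (Suc p) [a, b]) \<in> BA2_lang"
    unfolding BA2_lang_def by (intro CollectI exI[of _ "Suc p"]) (rule refl)
  then have "concat (replicate (Suc p) [a, b]) @ b # a # concat (replicate p [a, b]) @ concat (replicate (Suc p) [a, b])
      \<in> BA2_lang"
    using synt_le_memD[OF le, of "[]" "[]"] by simp
  then obtain n where "concat (replicate (Suc p) [a, b]) @
      b # (a # concat (replicate p [a, b]) @ concat (replicate (Suc p) [a, b])) = concat (replicate n [a, b])"
    unfolding BA2_lang_def by blast
  then show False by (rule notE[OF BA2_not_prefix sym])
qed

lemma U_no_aa: "concat (replicate n [a, b]) \<noteq> u @ [a, a] @ v"
proof (induction n arbitrary: u)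
  case (Suc n)
  then show ?case
    by (cases u rule: remdups_adj.cases) (auto simp: Cons_eq_append_conv)
qed simp

text \<open>\<open>U\<^sup>+\<close> violates the swap inequality: \<open>(ab)\<^sup>p\<^sup>+\<^sup>1\<close> has no factor \<open>aa\<close>, but
  \<open>(ab)\<^sup>p\<^sup>+\<^sup>1 ba (ab)\<^sup>p (ab)\<^sup>p\<^sup>+\<^sup>1\<close> has.\<close>
lemma U_violates_swap_inequality: "\<not> swap_inequality (synt_monoid U_lang) (synt_order U_lang)"
proof
  assume "swap_inequality (synt_monoid U_lang) (synt_order U_lang)"
  then obtain p where le: "synt_le U_lang
     (concat (replicate (Suc p) [a, b]) @ b # a # concat (replicate p [a, b]) @ concat (replicate (Suc p) [a, b]))
     (concat (replicate (Suc p) [a, b]))"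
    by (rule synt_swap_inequality_letters)
  have "concat (replicate (Suc p) [a, b]) \<in> U_lang"
    unfolding U_lang_def using U_no_aa[of "Suc p"] by blast
  then have mem: "concat (replicate (Suc p) [a, b]) @ b # a # concat (replicate p [a, b]) @
      concat (replicate (Suc p) [a, b]) \<in> U_lang"
    using synt_le_memD[OF le, of "[]" "[]"] by simp
  obtain w where "concat (replicate p [a, b]) @ concat (replicate (Suc p) [a, b]) = a # w"
    by (cases p) auto
  then have "concat (replicate (Suc p) [a, b]) @ b # a # concat (replicate p [a, b]) @
      concat (replicate (Suc p) [a, b]) = (concat (replicate (Suc p) [a, b]) @ [b]) @ [a, a] @ w"
    by simp
  then show False using mem unfolding U_lang_def by blast
qed

theorem mainTheorem15:
  fixes L :: "('a::finite) list set"
    and G :: "'a list set set"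
    and Gr :: "'g monoid"
  assumes "regular L"
    and "generating_set (synt_monoid L) G"
    and "(\<exists>u\<in>lists G. \<exists>v\<in>lists G. \<exists>w1\<in>lists G. \<exists>w2\<in>lists G.
            u = w1 @ w2 \<and> v \<in> shuffles w1 w2 \<and>
            eval (synt_monoid L) u \<otimes>\<^bsub>synt_monoid L\<^esub> eval (synt_monoid L) u
              = eval (synt_monoid L) u \<and>
            \<not> synt_order L (eval (synt_monoid L) (u @ v @ u)) (eval (synt_monoid L) u))
       \<or> (group Gr \<and> \<not> comm_group Gr \<and> odivides Gr (=) (synt_monoid L) (synt_order L))
       \<or> (\<exists>q>1. Tq_monoid (synt_monoid L) q)
       \<or> odivides (synt_monoid BA2_lang) (synt_order BA2_lang) (synt_monoid L) (synt_order L)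
       \<or> odivides (synt_monoid U_lang) (synt_order U_lang) (synt_monoid L) (synt_order L)"
  shows "L \<notin> PolCom"
proof
  assume L: "L \<in> PolCom"
  let ?M = "synt_monoid L"
  have perm_ineq: "permutation_inequality ?M (synt_order L)"
    using L by (rule PolCom_permutation_inequality)
  have swap: "swap_inequality ?M (synt_order L)"
    using monoid.swap_inequality_if_permutation_inequality[OF monoid_synt_monoid] perm_ineq
      finite_synt_monoid[OF assms(1)] by blast
  have no_Tq: "\<not> Tq_monoid ?M q" if "1 < q" for q
    by (rule monoid.Tq_violates_permutation_inequality[OF monoid_synt_monoid, where leq = "synt_order L"])
      (fact synt_order_trans synt_order_antisym synt_order_mult_left perm_ineq that)+
  have "G \<subseteq> carrier ?M" using assms(2) by (simp add: generating_set_def)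
  show False
    using assms(3) apply (elim disjE)
    subgoal using permutation_inequality_shuffle[OF perm_ineq \<open>G \<subseteq> carrier ?M\<close>] by blast
    subgoal using group.comm_group_if_swap_equality swap_inequality_divisor[OF swap] by blast
    subgoal using no_Tq by blast
    subgoal using BA2_violates_swap_inequality swap_inequality_divisor[OF swap] by blast
    subgoal using U_violates_swap_inequality swap_inequality_divisor[OF swap] by blast
    done
qed

end
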